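(* Let $\mathcal{C}$ be a class of finite digraphs for which there is a natural number $N$ such that every disjoint edge set in every member of $\mathcal{C}$ has size at most $N$. Then $\mathcal{C}$ is well quasi-ordered under both the standard and the strong homomorphic image orderings.
   Context: A digraph is a set $D$ with a binary relation $E(D)\subseteq D\times D$ (edges; loops allowed). Edges $(a_1,b_1),\dots,(a_k,b_k)$ form a disjoint edge set if the vertices $a_1,\dots,a_k,b_1,\dots,b_k$ are all distinct. A homomorphism $\phi:D_1\to D_2$ maps edges to edges; it is strong if additionally every edge of $D_2$ between vertices of $\phi(D_1)$ is the image of an edge of $D_1$. Epimorphism = surjective homomorphism. Standard homomorphic image ordering: $A\preceq B$ iff there is an epimorphism $B\to A$; strong homomorphic image ordering: $A\preceq B$ iff there is a strong epimorphism $B\to A$. Well quasi-ordered means no infinite strictly decreasing sequence and no infinite antichain; structures considered up to isomorphism. *)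

theory Defs
  imports Main
begin

text \<open>Vertices are taken from nat; every finite digraph is isomorphic
to one on nat, so classes of finite digraphs (up to isomorphism) are sets of such pairs.\<close>

type_synonym digraph = "nat set \<times> (nat \<times> nat) set"

definition verts :: "digraph \<Rightarrow> nat set" where "verts D = fst D"
definition edges :: "digraph \<Rightarrow> (nat \<times> nat) set" where "edges D = snd D"

definition finite_digraph :: "digraph \<Rightarrow> bool" where
  "finite_digraph D \<longleftrightarrow> finite (verts D) \<and> edges D \<subseteq> verts D \<times> verts D"

definition disjoint_edge_set :: "digraph \<Rightarrow> (nat \<times> nat) list \<Rightarrow> bool" where
  "disjoint_edge_set D es \<longleftrightarrow> set es \<subseteq> edges D \<and> distinct (map fst es @ map snd es)"

definition hom :: "(nat \<Rightarrow> nat) \<Rightarrow> digraph \<Rightarrow> digraph \<Rightarrow> bool" where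
  "hom \<phi> D1 D2 \<longleftrightarrow> \<phi> ` verts D1 \<subseteq> verts D2 \<and>
     (\<forall>a b. (a, b) \<in> edges D1 \<longrightarrow> (\<phi> a, \<phi> b) \<in> edges D2)"

definition strong_hom :: "(nat \<Rightarrow> nat) \<Rightarrow> digraph \<Rightarrow> digraph \<Rightarrow> bool" where
  "strong_hom \<phi> D1 D2 \<longleftrightarrow> hom \<phi> D1 D2 \<and>
     (\<forall>x \<in> \<phi> ` verts D1. \<forall>y \<in> \<phi> ` verts D1. (x, y) \<in> edges D2 \<longrightarrow>
        (\<exists>a b. (a, b) \<in> edges D1 \<and> \<phi> a = x \<and> \<phi> b = y))"

definition epi :: "(nat \<Rightarrow> nat) \<Rightarrow> digraph \<Rightarrow> digraph \<Rightarrow> bool" where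
  "epi \<phi> D1 D2 \<longleftrightarrow> hom \<phi> D1 D2 \<and> \<phi> ` verts D1 = verts D2"

definition strong_epi :: "(nat \<Rightarrow> nat) \<Rightarrow> digraph \<Rightarrow> digraph \<Rightarrow> bool" where
  "strong_epi \<phi> D1 D2 \<longleftrightarrow> strong_hom \<phi> D1 D2 \<and> \<phi> ` verts D1 = verts D2"

definition hom_image_le :: "digraph \<Rightarrow> digraph \<Rightarrow> bool" where
  "hom_image_le A B \<longleftrightarrow> (\<exists>\<phi>. epi \<phi> B A)"

definition strong_hom_image_le :: "digraph \<Rightarrow> digraph \<Rightarrow> bool" where
  "strong_hom_image_le A B \<longleftrightarrow> (\<exists>\<phi>. strong_epi \<phi> B A)"

definition wqo_on :: "'x set \<Rightarrow> ('x \<Rightarrow> 'x \<Rightarrow> bool) \<Rightarrow> bool" where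
  "wqo_on A le \<longleftrightarrow>
     \<not> (\<exists>f :: nat \<Rightarrow> 'x. (\<forall>n. f n \<in> A) \<and> (\<forall>n. le (f (Suc n)) (f n) \<and> \<not> le (f n) (f (Suc n)))) \<and>
     \<not> (\<exists>f :: nat \<Rightarrow> 'x. (\<forall>n. f n \<in> A) \<and> (\<forall>i j. i \<noteq> j \<longrightarrow> \<not> le (f i) (f j)))"

end

theory Submission
  imports Defs "HOL-Library.Ramsey" "HOL-Library.Equipollence"
begin

(* Fix a maximum disjoint edge set of D and let K be the set of its at most 2N endpoints.
   By maximality every edge that is not a loop meets K, so D is determined up to isomorphism by
   the digraph induced on K together with the type of each vertex outside K: its out- and
   in-neighbours in K and whether it carries a loop. Labelling K by rank, only finitely many
   such skeletons and types exist. If D and D' have the same skeleton and D' has at least as many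
   vertices of every type as D, then matching K' with K by rank and mapping each type class of D'
   onto the corresponding class of D is a strong epimorphism D' -> D. Ramsey's theorem yields
   such a pair in every infinite sequence, so there is no infinite antichain.
   An epimorphism either decreases the number of vertices or is bijective, and a bijective
   epimorphism either increases the number of edges or is an isomorphism; so (number of
   vertices, number of non-edges) decreases lexicographically along a strictly descending chain. *)

lemma exists_fibrewise_surjection:
  fixes f :: "'a \<Rightarrow> 'c" and g :: "'b \<Rightarrow> 'c"
  assumes "finite A" "finite B"
    and card_fibres: "\<And>c. card {b \<in> B. g b = c} \<le> card {a \<in> A. f a = c}"
    and fibres_nonempty: "\<And>a. a \<in> A \<Longrightarrow> \<exists>b \<in> B. g b = f a"
  obtains \<phi> where "\<phi> ` A = B" "\<And>a. a \<in> A \<Longrightarrow> g (\<phi> a) = f a"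
proof -
  have "\<exists>\<psi>. \<psi> ` {a \<in> A. f a = c} = {b \<in> B. g b = c}" for c
  proof (cases "{a \<in> A. f a = c} = {}")
    case True
    then have "card {b \<in> B. g b = c} = 0"
      using card_fibres[of c] unfolding True by simp
    then have "{b \<in> B. g b = c} = {}"
      using assms(2) by simp
    with True show ?thesis by (metis image_empty)
  next
    case False
    then obtain b0 where b0: "b0 \<in> {b \<in> B. g b = c}"
      using fibres_nonempty by blast
    have "{b \<in> B. g b = c} \<lesssim> {a \<in> A. f a = c}"
      using card_fibres assms(1,2) by (simp add: lepoll_iff_card_le)
    then obtain \<psi> where "{b \<in> B. g b = c} \<subseteq> \<psi> ` {a \<in> A. f a = c}"
      unfolding lepoll_iff by blast
    then have "(\<lambda>a. if \<psi> a \<in> {b \<in> B. g b = c} then \<psi> a else b0) ` {a \<in> A. f a = c}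
        = {b \<in> B. g b = c}"
      using b0 by (auto simp: image_iff)
    then show ?thesis by blast
  qed
  then obtain \<Psi> where \<Psi>: "\<And>c. \<Psi> c ` {a \<in> A. f a = c} = {b \<in> B. g b = c}"
    by metis
  have maps_to_fibre: "\<Psi> (f a) a \<in> B \<and> g (\<Psi> (f a) a) = f a" if "a \<in> A" for a
    using \<Psi>[of "f a"] that by blast
  have "B \<subseteq> (\<lambda>a. \<Psi> (f a) a) ` A"
  proof
    fix b assume "b \<in> B"
    then have "b \<in> \<Psi> (g b) ` {a \<in> A. f a = g b}"
      using \<Psi>[of "g b"] by simp
    then obtain a where "a \<in> A" "f a = g b" "b = \<Psi> (g b) a"
      by blast
    then show "b \<in> (\<lambda>a. \<Psi> (f a) a) ` A"
      using image_eqI[of b "\<lambda>a. \<Psi> (f a) a" a A] by simp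
  qed
  with maps_to_fibre show ?thesis
    using that[of "\<lambda>a. \<Psi> (f a) a"] by blast
qed

lemma exists_pair_same_key_le_counts:
  fixes key :: "nat \<Rightarrow> 'k" and cnt :: "nat \<Rightarrow> 'c \<Rightarrow> nat"
  assumes "finite (range key)" "finite U" and outside: "\<And>n c. c \<notin> U \<Longrightarrow> cnt n c = 0"
  shows "\<exists>i j. i < j \<and> key i = key j \<and> (\<forall>c. cnt i c \<le> cnt j c)"
proof -
  define colour where "colour i j = (key i, {c \<in> U. cnt j c < cnt i c})" for i j
  define colours where "colours = range key \<times> Pow U"
  have colour_in: "colour i j \<in> colours" for i j
    unfolding colour_def colours_def by auto
  have "finite colours"
    unfolding colours_def using assms(1,2) by simp
  then obtain h where h: "bij_betw h colours {0..<card colours}"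
    using ex_bij_betw_finite_nat by blast
  then have inj: "inj_on h colours" and bounded: "\<And>c. c \<in> colours \<Longrightarrow> h c < card colours"
    by (auto simp: bij_betw_def)
  define pair_colour where "pair_colour X = h (colour (Min X) (Max X))" for X :: "nat set"
  have "\<forall>x\<in>UNIV. \<forall>y\<in>UNIV. x \<noteq> y \<longrightarrow> pair_colour {x, y} < card colours"
    unfolding pair_colour_def by (simp add: bounded colour_in)
  from Ramsey2[OF infinite_UNIV_nat this] obtain Y t where Y: "infinite Y"
    and monochromatic: "\<forall>x\<in>Y. \<forall>y\<in>Y. x \<noteq> y \<longrightarrow> pair_colour {x, y} = t"
    by (elim exE conjE)
  have "h (colour x y) = t" if "x \<in> Y" "y \<in> Y" "x < y" for x y
    using monochromatic[rule_format, of x y] that unfolding pair_colour_def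
    by (simp add: min_def max_def)
  then have same_colour: "colour x y = colour x' y'"
    if "x \<in> Y" "y \<in> Y" "x < y" "x' \<in> Y" "y' \<in> Y" "x' < y'" for x y x' y'
    using that inj_onD[OF inj _ colour_in colour_in] by metis
  have above: "\<exists>y \<in> Y. x < y" for x
    using Y infinite_nat_iff_unbounded by blast
  have no_decrease: "snd (colour x y) = {}" if xy: "x \<in> Y" "y \<in> Y" "x < y" for x y
  proof (rule ccontr)
    assume "snd (colour x y) \<noteq> {}"
    then obtain c where c: "c \<in> snd (colour x y)" by blast
    text \<open>A member of \<open>Y\<close> minimising \<open>cnt _ c\<close> cannot be followed by a decrease.\<close>
    obtain m where m: "m \<in> Y" "\<And>y. y \<in> Y \<Longrightarrow> cnt m c \<le> cnt y c"
      using ex_has_least_nat[of "\<lambda>y. y \<in> Y" x "\<lambda>y. cnt y c"] xy(1) by blast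
    obtain m' where m': "m' \<in> Y" "m < m'"
      using above[of m] by blast
    have "c \<in> snd (colour m m')"
      using same_colour[OF xy m(1) m'] c by simp
    then show False
      using m(2)[OF m'(1)] unfolding colour_def by simp
  qed
  obtain x0 where x0: "x0 \<in> Y"
    using above[of 0] by blast
  obtain x1 where x1: "x1 \<in> Y" "x0 < x1"
    using above[of x0] by blast
  obtain x2 where x2: "x2 \<in> Y" "x1 < x2"
    using above[of x1] by blast
  have "key x0 = key x1"
    using same_colour[OF x0 x1 x1(1) x2] unfolding colour_def by simp
  moreover have "cnt x0 c \<le> cnt x1 c" for c
    using no_decrease[OF x0 x1] outside[of c] unfolding colour_def
    by (cases "c \<in> U") (auto simp: not_less)
  ultimately show ?thesis
    using x1(2) by blast
qed

lemma strict_mono_on_card_less: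
  fixes A :: "'a::linorder set"
  assumes "finite A"
  shows "strict_mono_on A (\<lambda>v. card {u \<in> A. u < v})"
proof (rule strict_mono_onI)
  fix x y assume "x \<in> A" "y \<in> A" "x < y"
  have "{u \<in> A. u < x} \<subset> {u \<in> A. u < y}"
  proof
    show "{u \<in> A. u < x} \<subseteq> {u \<in> A. u < y}"
      using \<open>x < y\<close> by (auto intro: less_trans)
    show "{u \<in> A. u < x} \<noteq> {u \<in> A. u < y}"
      using \<open>x \<in> A\<close> \<open>x < y\<close> by blast
  qed
  then show "card {u \<in> A. u < x} < card {u \<in> A. u < y}"
    using assms by (intro psubset_card_mono) auto
qed

lemma card_less_less_card:
  fixes A :: "'a::linorder set"
  assumes "finite A" "v \<in> A"
  shows "card {u \<in> A. u < v} < card A"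
proof (rule psubset_card_mono[OF assms(1)])
  have "v \<notin> {u \<in> A. u < v}"
    by simp
  then show "{u \<in> A. u < v} \<subset> A"
    using assms(2) by blast
qed

lemma strong_hom_image_le_imp_hom_image_le:
  "strong_hom_image_le A B \<Longrightarrow> hom_image_le A B"
  unfolding strong_hom_image_le_def hom_image_le_def strong_epi_def epi_def strong_hom_def
  by blast

lemma epi_card_verts_le:
  assumes "epi \<phi> B A" "finite (verts B)"
  shows "card (verts A) \<le> card (verts B)"
  using assms card_image_le[of "verts B" \<phi>] unfolding epi_def by simp

lemma strong_epi_inv_into_if_inj_epi:
  assumes A: "finite_digraph A" and B: "finite_digraph B" and "epi \<phi> B A" "inj_on \<phi> (verts B)"
    and card_edges: "card (edges A) \<le> card (edges B)"
  shows "strong_epi (inv_into (verts B) \<phi>) A B"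
proof -
  let ?\<psi> = "inv_into (verts B) \<phi>"
  have image: "\<phi> ` verts B = verts A" and EB: "edges B \<subseteq> verts B \<times> verts B"
    using assms(3) B unfolding epi_def finite_digraph_def by auto
  have inj_edges: "inj_on (map_prod \<phi> \<phi>) (edges B)"
    using map_prod_inj_on[OF assms(4) assms(4)] EB by (rule inj_on_subset)
  have sub: "map_prod \<phi> \<phi> ` edges B \<subseteq> edges A"
    using assms(3) unfolding epi_def hom_def by auto
  have fin: "finite (edges A)"
    using A finite_subset unfolding finite_digraph_def by blast
  have "card (map_prod \<phi> \<phi> ` edges B) = card (edges A)"
    using card_mono[OF fin sub] card_edges card_image[OF inj_edges] by linarith
  then have edges_A: "edges A = map_prod \<phi> \<phi> ` edges B"
    using card_subset_eq[OF fin sub] by simp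
  have \<psi>_\<phi>: "?\<psi> (\<phi> v) = v" if "v \<in> verts B" for v
    using assms(4) that by simp
  have image_\<psi>: "?\<psi> ` verts A = verts B"
    unfolding image[symmetric] image_image using \<psi>_\<phi> by simp
  have "(?\<psi> x, ?\<psi> y) \<in> edges B" if "(x, y) \<in> edges A" for x y
    using that EB \<psi>_\<phi> unfolding edges_A by auto
  moreover have "\<exists>x y. (x, y) \<in> edges A \<and> ?\<psi> x = a \<and> ?\<psi> y = b" if "(a, b) \<in> edges B" for a b
    using that EB \<psi>_\<phi> unfolding edges_A by force
  ultimately show ?thesis
    using image_\<psi> unfolding strong_epi_def strong_hom_def hom_def by auto
qed

definition digraph_size :: "digraph \<Rightarrow> nat \<times> nat" where
  "digraph_size D = (card (verts D), card (verts D \<times> verts D) - card (edges D))"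

lemma hom_image_le_imp_size_less_or_strong_hom_image_le:
  assumes A: "finite_digraph A" and B: "finite_digraph B" and "hom_image_le A B"
  shows "(digraph_size A, digraph_size B) \<in> less_than <*lex*> less_than \<or> strong_hom_image_le B A"
proof -
  obtain \<phi> where \<phi>: "epi \<phi> B A"
    using assms(3) unfolding hom_image_le_def by blast
  have fin: "finite (verts A)" "finite (verts B)" and EA: "edges A \<subseteq> verts A \<times> verts A"
    using A B unfolding finite_digraph_def by auto
  consider (fewer) "card (verts A) < card (verts B)" | (same) "card (verts A) = card (verts B)"
    using epi_card_verts_le[OF \<phi> fin(2)] by linarith
  then show ?thesis
  proof cases
    case same
    have inj: "inj_on \<phi> (verts B)"
      using eq_card_imp_inj_on[OF fin(2), of \<phi>] \<phi> same unfolding epi_def by simp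
    show ?thesis
    proof (cases "card (edges A) \<le> card (edges B)")
      case True
      then show ?thesis
        using strong_epi_inv_into_if_inj_epi[OF A B \<phi> inj]
        unfolding strong_hom_image_le_def by blast
    next
      case False
      have "card (edges A) \<le> card (verts A \<times> verts A)"
        using EA fin by (intro card_mono) auto
      then show ?thesis
        using False same unfolding digraph_size_def by (simp add: card_cartesian_product; linarith)
    qed
  qed (simp add: digraph_size_def)
qed

lemma no_strictly_descending_chain:
  assumes fin: "\<forall>D\<in>C. finite_digraph D"
    and le_hom: "\<And>A B. le A B \<Longrightarrow> hom_image_le A B"
    and strong_le: "\<And>A B. strong_hom_image_le A B \<Longrightarrow> le A B"
  shows "\<not> (\<exists>f. (\<forall>n. f n \<in> C) \<and> (\<forall>n. le (f (Suc n)) (f n) \<and> \<not> le (f n) (f (Suc n))))"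
proof
  assume "\<exists>f. (\<forall>n. f n \<in> C) \<and> (\<forall>n. le (f (Suc n)) (f n) \<and> \<not> le (f n) (f (Suc n)))"
  then obtain f where fC: "\<And>n. f n \<in> C"
    and chain: "\<And>n. le (f (Suc n)) (f n)" "\<And>n. \<not> le (f n) (f (Suc n))"
    by blast
  have "(f (Suc n), f n) \<in> inv_image (less_than <*lex*> less_than) digraph_size" for n
  proof -
    have "hom_image_le (f (Suc n)) (f n)" "\<not> strong_hom_image_le (f n) (f (Suc n))"
      using le_hom strong_le chain by blast+
    then show ?thesis
      using hom_image_le_imp_size_less_or_strong_hom_image_le[of "f (Suc n)" "f n"] fin fC by simp
  qed
  then show False
    using wf_iff_no_infinite_down_chain by blast
qed

definition disjoint_edge_bound :: "nat \<Rightarrow> digraph \<Rightarrow> bool" where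
  "disjoint_edge_bound N D \<longleftrightarrow> (\<forall>es. disjoint_edge_set D es \<longrightarrow> length es \<le> N)"

definition max_disjoint_edge_set :: "digraph \<Rightarrow> (nat \<times> nat) list" where
  "max_disjoint_edge_set D = arg_max length (disjoint_edge_set D)"

definition matched_verts :: "digraph \<Rightarrow> nat set" where
  "matched_verts D = fst ` set (max_disjoint_edge_set D) \<union> snd ` set (max_disjoint_edge_set D)"

lemma max_disjoint_edge_set:
  assumes "disjoint_edge_bound N D"
  shows "disjoint_edge_set D (max_disjoint_edge_set D)"
    and "disjoint_edge_set D es \<Longrightarrow> length es \<le> length (max_disjoint_edge_set D)"
proof -
  have "disjoint_edge_set D []"
    by (simp add: disjoint_edge_set_def)
  moreover have "\<forall>es. disjoint_edge_set D es \<longrightarrow> length es < Suc N"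
    using assms unfolding disjoint_edge_bound_def by (simp add: less_Suc_eq_le)
  ultimately show "disjoint_edge_set D (max_disjoint_edge_set D)"
    and "disjoint_edge_set D es \<Longrightarrow> length es \<le> length (max_disjoint_edge_set D)"
    using arg_max_nat_lemma[of "disjoint_edge_set D" "[]" length] unfolding max_disjoint_edge_set_def
    by blast+
qed

lemma finite_matched_verts: "finite (matched_verts D)"
  unfolding matched_verts_def by simp

lemma card_matched_verts_le:
  assumes "disjoint_edge_bound N D"
  shows "card (matched_verts D) \<le> 2 * N"
proof -
  let ?es = "max_disjoint_edge_set D"
  have "card (matched_verts D) \<le> card (fst ` set ?es) + card (snd ` set ?es)"
    unfolding matched_verts_def by (rule card_Un_le)
  also have "\<dots> \<le> 2 * length ?es"
    using card_image_le[of "set ?es" fst] card_image_le[of "set ?es" snd] card_length[of ?es]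
    by simp
  also have "\<dots> \<le> 2 * N"
    using assms max_disjoint_edge_set(1)[OF assms] unfolding disjoint_edge_bound_def by simp
  finally show ?thesis .
qed

lemma edge_meets_matched_verts:
  assumes "disjoint_edge_bound N D" "(a, b) \<in> edges D" "a \<noteq> b"
  shows "a \<in> matched_verts D \<or> b \<in> matched_verts D"
proof (rule ccontr)
  let ?es = "max_disjoint_edge_set D"
  assume "\<not> (a \<in> matched_verts D \<or> b \<in> matched_verts D)"
  then have "disjoint_edge_set D (?es @ [(a, b)])"
    using max_disjoint_edge_set(1)[OF assms(1)] assms(2,3)
    unfolding disjoint_edge_set_def matched_verts_def by auto
  then show False
    using max_disjoint_edge_set(2)[OF assms(1)] by fastforce
qed

text \<open>Matched vertices are labelled by their rank, which makes the matched parts of different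
  digraphs comparable.\<close>

definition matched_rank :: "digraph \<Rightarrow> nat \<Rightarrow> nat" where
  "matched_rank D v = card {u \<in> matched_verts D. u < v}"

lemma inj_on_matched_rank: "inj_on (matched_rank D) (matched_verts D)"
  unfolding matched_rank_def[abs_def]
  by (intro strict_mono_on_imp_inj_on strict_mono_on_card_less finite_matched_verts)

lemma matched_rank_less:
  assumes "disjoint_edge_bound N D" "v \<in> matched_verts D"
  shows "matched_rank D v < 2 * N"
  using card_less_less_card[OF finite_matched_verts assms(2)] card_matched_verts_le[OF assms(1)]
  unfolding matched_rank_def by linarith

type_synonym vertex_type = "nat set \<times> nat set \<times> bool"

definition vertex_type :: "digraph \<Rightarrow> nat \<Rightarrow> vertex_type" where
  "vertex_type D v =
     (matched_rank D ` {u \<in> matched_verts D. (v, u) \<in> edges D},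
      matched_rank D ` {u \<in> matched_verts D. (u, v) \<in> edges D},
      (v, v) \<in> edges D)"

definition vertex_code :: "digraph \<Rightarrow> nat \<Rightarrow> nat + vertex_type" where
  "vertex_code D v =
     (if v \<in> matched_verts D then Inl (matched_rank D v) else Inr (vertex_type D v))"

definition matched_edges :: "digraph \<Rightarrow> (nat \<times> nat) set" where
  "matched_edges D =
     map_prod (matched_rank D) (matched_rank D) ` (edges D \<inter> matched_verts D \<times> matched_verts D)"

text \<open>The last argument of \<open>code_adj\<close> tells whether the two endpoints coincide: two unmatched
  vertices can only be joined by a loop.\<close>

fun code_adj :: "(nat \<times> nat) set \<Rightarrow> nat + vertex_type \<Rightarrow> nat + vertex_type \<Rightarrow> bool \<Rightarrow> bool" where
  "code_adj S (Inl i) (Inl j) same \<longleftrightarrow> (i, j) \<in> S"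
| "code_adj S (Inl i) (Inr t) same \<longleftrightarrow> i \<in> fst (snd t)"
| "code_adj S (Inr t) (Inl j) same \<longleftrightarrow> j \<in> fst t"
| "code_adj S (Inr t) (Inr t') same \<longleftrightarrow> same \<and> snd (snd t)"

lemma code_adj_mono: "code_adj S c c' False \<Longrightarrow> code_adj S c c' True"
  by (cases c; cases c') auto

lemma edge_iff_code_adj:
  assumes "disjoint_edge_bound N D"
  shows "(a, b) \<in> edges D \<longleftrightarrow>
    code_adj (matched_edges D) (vertex_code D a) (vertex_code D b) (a = b)"
proof -
  let ?K = "matched_verts D" and ?r = "matched_rank D"
  have inj: "inj_on ?r ?K"
    by (rule inj_on_matched_rank)
  have inj2: "inj_on (map_prod ?r ?r) (?K \<times> ?K)"
    using map_prod_inj_on[OF inj inj] .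
  consider "a \<in> ?K" "b \<in> ?K" | "a \<in> ?K" "b \<notin> ?K" | "a \<notin> ?K" "b \<in> ?K" | "a \<notin> ?K" "b \<notin> ?K"
    by blast
  then show ?thesis
  proof cases
    case 1
    then show ?thesis
      using inj_on_image_mem_iff[OF inj2, of "(a, b)" "edges D \<inter> ?K \<times> ?K"]
      by (simp add: vertex_code_def matched_edges_def)
  next
    case 2
    then show ?thesis
      using inj_on_image_mem_iff[OF inj, of a "{u \<in> ?K. (u, b) \<in> edges D}"]
      by (simp add: vertex_code_def vertex_type_def)
  next
    case 3
    then show ?thesis
      using inj_on_image_mem_iff[OF inj, of b "{u \<in> ?K. (a, u) \<in> edges D}"]
      by (simp add: vertex_code_def vertex_type_def)
  next
    case 4
    then have "(a, b) \<in> edges D \<longleftrightarrow> a = b \<and> (a, a) \<in> edges D"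
      using edge_meets_matched_verts[OF assms, of a b] by blast
    moreover have "code_adj (matched_edges D) (vertex_code D a) (vertex_code D b) (a = b)
        \<longleftrightarrow> a = b \<and> (a, a) \<in> edges D"
      using 4 by (simp add: vertex_code_def vertex_type_def)
    ultimately show ?thesis
      by blast
  qed
qed

lemma strong_epi_if_code_preserving:
  assumes "finite_digraph D1" "finite_digraph D2"
    and "disjoint_edge_bound M D1" "disjoint_edge_bound N D2"
    and same_edges: "matched_edges D1 = matched_edges D2"
    and onto: "\<phi> ` verts D2 = verts D1"
    and code: "\<And>v. v \<in> verts D2 \<Longrightarrow> vertex_code D1 (\<phi> v) = vertex_code D2 v"
  shows "strong_epi \<phi> D2 D1"
proof -
  let ?S = "matched_edges D2"
  note adj1 = edge_iff_code_adj[OF assms(3)] and adj2 = edge_iff_code_adj[OF assms(4)]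
  have E1: "edges D1 \<subseteq> verts D1 \<times> verts D1" and E2: "edges D2 \<subseteq> verts D2 \<times> verts D2"
    using assms(1,2) unfolding finite_digraph_def by auto
  have "(\<phi> a, \<phi> b) \<in> edges D1" if ab: "(a, b) \<in> edges D2" for a b
  proof -
    have "a \<in> verts D2" "b \<in> verts D2"
      using ab E2 by auto
    then have "code_adj ?S (vertex_code D1 (\<phi> a)) (vertex_code D1 (\<phi> b)) (a = b)"
      using ab adj2[of a b] code by simp
    then have "code_adj ?S (vertex_code D1 (\<phi> a)) (vertex_code D1 (\<phi> b)) (\<phi> a = \<phi> b)"
      using code_adj_mono by (cases "a = b"; cases "\<phi> a = \<phi> b") auto
    then show ?thesis
      using adj1[of "\<phi> a" "\<phi> b"] same_edges by simp
  qed
  moreover have "\<exists>a b. (a, b) \<in> edges D2 \<and> \<phi> a = x \<and> \<phi> b = y" if xy: "(x, y) \<in> edges D1" for x y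
  proof -
    have "x \<in> \<phi> ` verts D2" "y \<in> \<phi> ` verts D2"
      using xy E1 onto by auto
    then obtain a b' where a: "a \<in> verts D2" "\<phi> a = x" and b': "b' \<in> verts D2" "\<phi> b' = y"
      by blast
    text \<open>A loop at \<open>x\<close> must be lifted to a loop, so the preimage of \<open>y\<close> is chosen to be
      \<open>a\<close> when \<open>y = x\<close>.\<close>
    define b where "b = (if x = y then a else b')"
    have b: "b \<in> verts D2" "\<phi> b = y" and same: "(a = b) = (x = y)"
      using a b' unfolding b_def by auto
    have "code_adj ?S (vertex_code D2 a) (vertex_code D2 b) (a = b)"
      using xy adj1[of x y] code[OF a(1)] code[OF b(1)] a(2) b(2) same same_edges by simp
    then show ?thesis
      using adj2[of a b] a b by blast
  qed
  ultimately show ?thesis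
    using onto unfolding strong_epi_def strong_hom_def hom_def by auto
qed

definition code_count :: "digraph \<Rightarrow> nat + vertex_type \<Rightarrow> nat" where
  "code_count D c = card {v \<in> verts D. vertex_code D v = c}"

definition skeleton :: "digraph \<Rightarrow> (nat \<times> nat) set \<times> (nat + vertex_type) set" where
  "skeleton D = (matched_edges D, vertex_code D ` verts D)"

lemma strong_hom_image_le_if_code_count_le:
  assumes "finite_digraph D1" "finite_digraph D2"
    and "disjoint_edge_bound M D1" "disjoint_edge_bound N D2"
    and same_skeleton: "skeleton D1 = skeleton D2"
    and count_le: "\<And>c. code_count D1 c \<le> code_count D2 c"
  shows "strong_hom_image_le D1 D2"
proof -
  have codes: "vertex_code D1 ` verts D1 = vertex_code D2 ` verts D2"
    using same_skeleton by (simp add: skeleton_def)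
  have "finite (verts D2)" "finite (verts D1)"
    using assms(1,2) unfolding finite_digraph_def by auto
  moreover have "\<exists>b \<in> verts D1. vertex_code D1 b = vertex_code D2 a" if "a \<in> verts D2" for a
    using codes that by (metis imageE imageI)
  ultimately obtain \<phi> where "\<phi> ` verts D2 = verts D1"
    and "\<And>v. v \<in> verts D2 \<Longrightarrow> vertex_code D1 (\<phi> v) = vertex_code D2 v"
    using exists_fibrewise_surjection[of "verts D2" "verts D1" "vertex_code D1" "vertex_code D2"]
      count_le unfolding code_count_def by blast
  then have "strong_epi \<phi> D2 D1"
    using strong_epi_if_code_preserving assms(1-4) same_skeleton by (simp add: skeleton_def)
  then show ?thesis
    unfolding strong_hom_image_le_def by blast
qed

definition code_universe :: "nat \<Rightarrow> (nat + vertex_type) set" where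
  "code_universe N = {..<2 * N} <+> Pow {..<2 * N} \<times> Pow {..<2 * N} \<times> UNIV"

lemma finite_code_universe: "finite (code_universe N)"
  unfolding code_universe_def by simp

lemma vertex_code_in_code_universe:
  assumes "disjoint_edge_bound N D"
  shows "vertex_code D v \<in> code_universe N"
  using matched_rank_less[OF assms]
  unfolding vertex_code_def vertex_type_def code_universe_def by auto

lemma code_count_eq_0:
  assumes "disjoint_edge_bound N D" "c \<notin> code_universe N"
  shows "code_count D c = 0"
proof -
  have "{v \<in> verts D. vertex_code D v = c} = {}"
    using vertex_code_in_code_universe[OF assms(1)] assms(2) by blast
  then show ?thesis
    unfolding code_count_def by (simp only: card.empty)
qed

definition skeleton_universe :: "nat \<Rightarrow> ((nat \<times> nat) set \<times> (nat + vertex_type) set) set" where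
  "skeleton_universe N = Pow ({..<2 * N} \<times> {..<2 * N}) \<times> Pow (code_universe N)"

lemma finite_skeleton_universe: "finite (skeleton_universe N)"
  unfolding skeleton_universe_def by (simp add: finite_code_universe)

lemma skeleton_in_skeleton_universe:
  assumes "disjoint_edge_bound N D"
  shows "skeleton D \<in> skeleton_universe N"
proof -
  have "matched_edges D \<subseteq> {..<2 * N} \<times> {..<2 * N}"
    using matched_rank_less[OF assms] unfolding matched_edges_def by auto
  moreover have "vertex_code D ` verts D \<subseteq> code_universe N"
    using vertex_code_in_code_universe[OF assms] by blast
  ultimately show ?thesis
    unfolding skeleton_def skeleton_universe_def by simp
qed

lemma exists_strong_hom_image_le_pair:
  fixes f :: "nat \<Rightarrow> digraph"
  assumes "\<And>n. finite_digraph (f n)" and bound: "\<And>n. disjoint_edge_bound N (f n)"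
  shows "\<exists>i j. i < j \<and> strong_hom_image_le (f i) (f j)"
proof -
  have "range (\<lambda>n. skeleton (f n)) \<subseteq> skeleton_universe N"
    using skeleton_in_skeleton_universe[OF bound] by blast
  then have finite_skeletons: "finite (range (\<lambda>n. skeleton (f n)))"
    using finite_skeleton_universe by (rule finite_subset)
  have "code_count (f n) c = 0" if "c \<notin> code_universe N" for n c
    using code_count_eq_0[OF bound that] .
  then have "\<exists>i j. i < j \<and> skeleton (f i) = skeleton (f j)
      \<and> (\<forall>c. code_count (f i) c \<le> code_count (f j) c)"
    by (rule exists_pair_same_key_le_counts[OF finite_skeletons finite_code_universe])
  then obtain i j where "i < j" and same: "skeleton (f i) = skeleton (f j)"
    and count_le: "\<forall>c. code_count (f i) c \<le> code_count (f j) c"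
    by blast
  have "strong_hom_image_le (f i) (f j)"
    using strong_hom_image_le_if_code_count_le[OF assms(1) assms(1) bound bound same] count_le
    by blast
  with \<open>i < j\<close> show ?thesis
    by blast
qed

lemma wqo_on_if_between_strong_hom_image_le_and_hom_image_le:
  fixes C :: "digraph set"
  assumes fin: "\<forall>D\<in>C. finite_digraph D" and bound: "\<forall>D\<in>C. disjoint_edge_bound N D"
    and le_hom: "\<And>A B. le A B \<Longrightarrow> hom_image_le A B"
    and strong_le: "\<And>A B. strong_hom_image_le A B \<Longrightarrow> le A B"
  shows "wqo_on C le"
  unfolding wqo_on_def
proof (intro conjI)
  show "\<not> (\<exists>f :: nat \<Rightarrow> digraph. (\<forall>n. f n \<in> C) \<and>
      (\<forall>n. le (f (Suc n)) (f n) \<and> \<not> le (f n) (f (Suc n))))"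
    using no_strictly_descending_chain[OF fin le_hom strong_le] .
  show "\<not> (\<exists>f :: nat \<Rightarrow> digraph. (\<forall>n. f n \<in> C) \<and> (\<forall>i j. i \<noteq> j \<longrightarrow> \<not> le (f i) (f j)))"
  proof
    assume "\<exists>f :: nat \<Rightarrow> digraph. (\<forall>n. f n \<in> C) \<and> (\<forall>i j. i \<noteq> j \<longrightarrow> \<not> le (f i) (f j))"
    then obtain f :: "nat \<Rightarrow> digraph"
      where fC: "\<And>n. f n \<in> C" and antichain: "\<And>i j. i \<noteq> j \<Longrightarrow> \<not> le (f i) (f j)"
      by blast
    obtain i j where "i < j" "strong_hom_image_le (f i) (f j)"
      using exists_strong_hom_image_le_pair[of f N] fC fin bound by blast
    then show False
      using antichain[of i j] strong_le by simp
  qed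
qed

theorem corollary2p7:
  fixes C :: "digraph set" and N :: nat
  assumes "\<forall>D \<in> C. finite_digraph D"
    and "\<forall>D \<in> C. \<forall>es. disjoint_edge_set D es \<longrightarrow> length es \<le> N"
  shows "wqo_on C hom_image_le \<and> wqo_on C strong_hom_image_le"
proof
  have bound: "\<forall>D\<in>C. disjoint_edge_bound N D"
    using assms(2) unfolding disjoint_edge_bound_def by blast
  show "wqo_on C hom_image_le"
    by (rule wqo_on_if_between_strong_hom_image_le_and_hom_image_le[OF assms(1) bound])
      (simp_all add: strong_hom_image_le_imp_hom_image_le)
  show "wqo_on C strong_hom_image_le"
    by (rule wqo_on_if_between_strong_hom_image_le_and_hom_image_le[OF assms(1) bound])
      (simp_all add: strong_hom_image_le_imp_hom_image_le)
qed

end
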